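(* Let $p$ be a prime, $m=p^2$, and $n,k$ positive integers with $(m,k-1)=1$ and $n=\mathrm{ind}_m(k)$; let $G=G(p^2,n,k)=\langle a,b;\ a^{p^2}=1,\ b^n=1,\ b^{-1}ab=a^k\rangle$. Then the right commutation semigroup $\mathrm{P}(G)$ and the left commutation semigroup $\Lambda(G)$ are complete, i.e. $\Sigma_G(R)$ and $\Sigma_G(L)$ are complete, where $R=\{k^j-1 \bmod m: j\in\mathbb{Z}_n\}$ and $L=\{1-k^j \bmod m: j\in\mathbb{Z}_n\}$.
   Context: $\mathrm{ind}_m(k)$ is the least positive integer $d$ with $k^d\equiv 1\pmod m$. Elements of $G$ are written uniquely as $a^ib^j$, $i\in\mathbb{Z}_m$, $j\in\mathbb{Z}_n$; $k_t=k^t-1\pmod m$. Commutators are $[x,y]=x^{-1}y^{-1}xy$; for $g\in G$, $\rho(g),\lambda(g):G\to G$ are $(x)\rho(g)=[x,g]$ and $(x)\lambda(g)=[g,x]$; maps are written on the right and composed left to right. $\mathrm{P}(G)$ and $\Lambda(G)$ are the semigroups under composition generated by $\{\rho(g)\}$ and $\{\lambda(g)\}$; they equal $\Sigma_G(R)$ and $\Sigma_G(L)$ respectively. For $x,y\in\mathbb{Z}_m$, $\mu(x,y):G\to G$ is $(a^ib^j)\mu(x,y)=a^{xik^j-yk_j}$, and $C(x,y)=\{\mu(x,yz):z\in\mathbb{Z}_m\}$. For $S\subseteq\mathbb{Z}_m$, $I(S)$ is the set of elements of $S$ invertible in $\mathbb{Z}_m$, and $S^*$ is the multiplicative subsemigroup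 generated by $S$. A base is $S\subseteq\mathbb{Z}_m$ with $0\in S$, $I(S)\ne\varnothing$. $\Sigma_G(S)$ is the semigroup generated by $\{\mu(s,z):s\in S,z\in\mathbb{Z}_m\}$. For $x\in S^*$, $Y(x)=\{s^*z: s^*\in S^*, z\in\mathbb{Z}_m, \exists s\in S,\ x\equiv ss^*\pmod m\}$; the $x$-family $\{C(x,y):y\in Y(x)\}$ is complete if it contains $C(x,1)$, and $\Sigma_G(S)$ is complete if every $x$-family ($x\in S^*$) is complete. *)

theory Defs
  imports "HOL-Number_Theory.Number_Theory"
begin

definition ind :: "int \<Rightarrow> int \<Rightarrow> nat" where
  "ind m k = (LEAST d::nat. 0 < d \<and> [k ^ d = 1] (mod m))"

(* mu(x,y) : G -> G, where the element a^i b^j of G (i in Z_m, j in Z_n) is encoded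
   as the pair (i,j) with 0 <= i < m, j < n, and the image a^e is encoded by e in Z_m
   (represented in {0..<m}). Outside the carrier the map is fixed to 0 so that
   equality of maps is equality on G. *)
definition mu :: "int \<Rightarrow> nat \<Rightarrow> int \<Rightarrow> int \<Rightarrow> int \<Rightarrow> (int \<times> nat \<Rightarrow> int)" where
  "mu m n k x y = (\<lambda>(i, j). if 0 \<le> i \<and> i < m \<and> j < n
       then (x * i * k ^ j - y * (k ^ j - 1)) mod m else 0)"

definition Cfam :: "int \<Rightarrow> nat \<Rightarrow> int \<Rightarrow> int \<Rightarrow> int \<Rightarrow> (int \<times> nat \<Rightarrow> int) set" where
  "Cfam m n k x y = {mu m n k x ((y * z) mod m) | z. 0 \<le> z \<and> z < m}"

inductive_set star_sg :: "int \<Rightarrow> int set \<Rightarrow> int set" for m S where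
  gen: "s \<in> S \<Longrightarrow> s \<in> star_sg m S"
| mult: "a \<in> star_sg m S \<Longrightarrow> b \<in> star_sg m S \<Longrightarrow> (a * b) mod m \<in> star_sg m S"

definition Yset :: "int \<Rightarrow> int set \<Rightarrow> int \<Rightarrow> int set" where
  "Yset m S x = {(t * z) mod m | t z. t \<in> star_sg m S \<and> 0 \<le> z \<and> z < m \<and>
                  (\<exists>s\<in>S. [x = s * t] (mod m))}"

definition family_complete :: "int \<Rightarrow> nat \<Rightarrow> int \<Rightarrow> int set \<Rightarrow> int \<Rightarrow> bool" where
  "family_complete m n k S x \<longleftrightarrow> (\<exists>y\<in>Yset m S x. Cfam m n k x y = Cfam m n k x 1)"

definition Sigma_complete :: "int \<Rightarrow> nat \<Rightarrow> int \<Rightarrow> int set \<Rightarrow> bool" where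
  "Sigma_complete m n k S \<longleftrightarrow> (\<forall>x\<in>star_sg m S. family_complete m n k S x)"

end

theory Submission
  imports Defs
begin

text \<open>Modulo \<open>p\<^sup>2\<close> every residue is either a unit or a multiple of \<open>p\<close>, and the product
  of two multiples of \<open>p\<close> vanishes. Hence, once the base \<open>S\<close> contains \<open>0\<close> and a unit
  (for \<open>R\<close> and \<open>L\<close> these are \<open>\<plusminus>(k\<^sup>0 - 1)\<close> and \<open>\<plusminus>(k - 1)\<close>), every \<open>x \<in> S\<^sup>*\<close>
  is congruent to \<open>s t\<close> with \<open>s \<in> S\<close> and \<open>t\<close> a unit of \<open>S\<^sup>*\<close>; units have finite order,
  so \<open>t\<inverse>\<close> is a multiple of \<open>t\<close> and \<open>1 = t t\<inverse> \<in> Y(x)\<close>, which makes the \<open>x\<close>-family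
  complete.\<close>

lemma power_mod_mem_star_sg:
  assumes "u \<in> star_sg m S" and "2 \<le> j"
  shows "u ^ j mod m \<in> star_sg m S"
  using assms(2)
proof (induction j rule: dec_induct)
  case base
  show ?case using star_sg.mult[OF assms(1) assms(1)] by (simp add: power2_eq_square)
next
  case (step j)
  have "(u ^ j mod m * u) mod m \<in> star_sg m S"
    using star_sg.mult[OF step.IH assms(1)] .
  moreover have "(u ^ j mod m * u) mod m = u ^ Suc j mod m"
    by (metis mod_mult_left_eq power_Suc2)
  ultimately show ?case by simp
qed

lemma one_mem_star_sg:
  fixes m u :: int
  assumes "u \<in> star_sg m S" and "coprime u m" and "1 < m"
  shows "1 \<in> star_sg m S"
proof -
  have "[u ^ totient (nat m) = 1] (mod m)"
    using residues.euler_theorem[of m u] assms(2,3) by (simp add: residues_def)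
  then have "[u ^ (2 * totient (nat m)) = 1] (mod m)"
    by (metis cong_pow power_mult power_one mult.commute)
  moreover have "0 < totient (nat m)" using assms(3) by simp
  ultimately show ?thesis
    using power_mod_mem_star_sg[OF assms(1), of "2 * totient (nat m)"] assms(3) by (simp add: cong_def Suc_le_eq)
qed

lemma star_sg_absorb_unit_factor:
  fixes m :: int
  assumes "t1 \<in> star_sg m S" "coprime t1 m" "s2 \<in> S" "coprime s2 m"
    "t2 \<in> star_sg m S" "coprime t2 m" and "m \<noteq> 0"
  shows "\<exists>t\<in>star_sg m S. coprime t m \<and> [s1 * t1 * (s2 * t2) = s1 * t] (mod m)"
proof (intro bexI conjI)
  let ?t = "(t1 * s2 mod m * t2) mod m"
  show "?t \<in> star_sg m S"
    by (intro star_sg.mult star_sg.gen assms(1,3,5))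
  show "coprime ?t m"
    using assms by (simp add: coprime_mod_left_iff)
  show "[s1 * t1 * (s2 * t2) = s1 * ?t] (mod m)"
    by (simp add: cong_def mod_mult_right_eq mod_mult_left_eq mult.assoc)
qed

lemma mult_eq_0_mod_prime_square:
  fixes p :: int
  assumes "p dvd a" and "p dvd b"
  shows "a * b mod p\<^sup>2 = 0"
  using assms by (simp add: mult_dvd_mono power2_eq_square)

lemma star_sg_unit_factorization:
  fixes p :: int
  assumes "prime p" and "0 \<in> S" and "1 \<in> star_sg (p\<^sup>2) S" and "x \<in> star_sg (p\<^sup>2) S"
  shows "\<exists>s\<in>S. \<exists>t\<in>star_sg (p\<^sup>2) S. coprime t (p\<^sup>2) \<and> [x = s * t] (mod p\<^sup>2)"
  using assms(4)
proof (induction rule: star_sg.induct)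
  case (gen s)
  then show ?case using assms(3) by (intro bexI[of _ s] bexI[of _ 1]) auto
next
  case (mult a b)
  let ?m = "p\<^sup>2"
  have m0: "?m \<noteq> 0" using assms(1) by auto
  have unit: "coprime s ?m" if "\<not> p dvd s" for s
    using that assms(1) by (simp add: prime_imp_coprime coprime_commute)
  obtain s1 t1 where s1: "s1 \<in> S" "t1 \<in> star_sg ?m S" "coprime t1 ?m" "[a = s1 * t1] (mod ?m)"
    using mult.IH(1) by blast
  obtain s2 t2 where s2: "s2 \<in> S" "t2 \<in> star_sg ?m S" "coprime t2 ?m" "[b = s2 * t2] (mod ?m)"
    using mult.IH(2) by blast
  have ab: "[a * b mod ?m = s1 * t1 * (s2 * t2)] (mod ?m)"
    using cong_mult[OF s1(4) s2(4)] by (simp add: cong_def)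
  consider "\<not> p dvd s2" | "\<not> p dvd s1" | "p dvd s1" "p dvd s2" by blast
  then show ?case
  proof cases
    case 1
    then show ?thesis
      using star_sg_absorb_unit_factor[OF s1(2,3) s2(1) unit s2(2,3) m0, of s1] ab s1(1)
      by (meson cong_trans)
  next
    case 2
    then show ?thesis
      using star_sg_absorb_unit_factor[OF s2(2,3) s1(1) unit s1(2,3) m0, of s2] ab s2(1)
      by (metis cong_trans mult.commute)
  next
    case 3
    have "p dvd a" "p dvd b"
      using 3 s1(4) s2(4) by (metis cong_dvd_iff cong_dvd_modulus dvd_mult2 dvd_triv_left power2_eq_square)+
    then have "[a * b mod ?m = 0 * 1] (mod ?m)"
      by (simp add: mult_eq_0_mod_prime_square cong_def)
    then show ?thesis using assms(2,3) by (intro bexI[of _ 0] bexI[of _ 1]) auto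
  qed
qed

lemma one_mem_Yset:
  fixes m :: int
  assumes "1 < m" and "s \<in> S" and "t \<in> star_sg m S" and "coprime t m" and "[x = s * t] (mod m)"
  shows "1 \<in> Yset m S x"
proof -
  obtain z where "[t * z = 1] (mod m)" using cong_solve_coprime_int[OF assms(4)] by blast
  then have "(t * (z mod m)) mod m = 1"
    using assms(1) by (simp add: cong_def mod_mult_right_eq)
  moreover have "0 \<le> z mod m" "z mod m < m" using assms(1) by auto
  ultimately show ?thesis
    unfolding Yset_def mem_Collect_eq using assms(2,3,5)
    by (intro exI[of _ t] exI[of _ "z mod m"]) auto
qed

lemma Sigma_complete_prime_square:
  fixes p u :: int
  assumes "prime p" and "0 \<in> S" and "u \<in> S" and "coprime u (p\<^sup>2)"
  shows "Sigma_complete (p\<^sup>2) n k S"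
  unfolding Sigma_complete_def family_complete_def
proof
  fix x assume x: "x \<in> star_sg (p\<^sup>2) S"
  have m1: "1 < p\<^sup>2"
    using prime_gt_1_int[OF assms(1)] by (simp add: one_less_power)
  have "1 \<in> star_sg (p\<^sup>2) S"
    using one_mem_star_sg[OF star_sg.gen[OF assms(3)] assms(4) m1] .
  then obtain s t where "s \<in> S" "t \<in> star_sg (p\<^sup>2) S" "coprime t (p\<^sup>2)" "[x = s * t] (mod p\<^sup>2)"
    using star_sg_unit_factorization[OF assms(1,2) _ x] by blast
  then have "1 \<in> Yset (p\<^sup>2) S x"
    using one_mem_Yset[OF m1] by blast
  then show "\<exists>y\<in>Yset (p\<^sup>2) S x. Cfam (p\<^sup>2) n k x y = Cfam (p\<^sup>2) n k x 1" by blast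
qed

text \<open>For \<open>n = 1\<close> the base \<open>{0}\<close> contains no unit, but every \<open>\<mu>(x, y)\<close> then ignores \<open>y\<close>.
  This case cannot be excluded in the theorem: \<open>ind\<close> is an unspecified \<open>LEAST\<close> when \<open>k\<close>
  is not a unit modulo \<open>p\<^sup>2\<close>.\<close>

lemma Sigma_complete_order_one:
  fixes m :: int
  assumes "0 < m"
  shows "Sigma_complete m 1 k {0}"
  unfolding Sigma_complete_def family_complete_def
proof
  fix x assume x: "x \<in> star_sg m {0}"
  have "y \<in> star_sg m {0} \<Longrightarrow> y = 0" for y
    by (induction rule: star_sg.induct) auto
  then have "x = 0" using x .
  then have "0 \<in> Yset m {0} x"
    unfolding Yset_def using assms by (auto intro!: exI[of _ 0] star_sg.gen)
  moreover
  define \<mu>\<^sub>0 where "\<mu>\<^sub>0 = mu m 1 k x 0"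
  have "mu m 1 k x y = \<mu>\<^sub>0" for y
    unfolding \<mu>\<^sub>0_def mu_def by auto
  then have "Cfam m 1 k x y = Cfam m 1 k x 1" for y
    unfolding Cfam_def by simp
  ultimately show "\<exists>y\<in>Yset m {0} x. Cfam m 1 k x y = Cfam m 1 k x 1" by blast
qed

theorem theorem6p3:
  fixes p k :: int and n :: nat
  assumes "prime p" and "0 < k" and "0 < n"
    and "coprime (p^2) (k - 1)"
    and "n = ind (p^2) k"
  shows "Sigma_complete (p^2) n k {(k ^ j - 1) mod (p^2) | j. j < n}
       \<and> Sigma_complete (p^2) n k {(1 - k ^ j) mod (p^2) | j. j < n}"
proof (cases "n = 1")
  case True
  have "{(k ^ j - 1) mod (p^2) | j. j < n} = {0}" "{(1 - k ^ j) mod (p^2) | j. j < n} = {0}"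
    using True by auto
  moreover have "0 < p^2" using assms(1) by (simp add: prime_gt_0_int)
  ultimately show ?thesis
    using True Sigma_complete_order_one by simp
next
  case False
  then have "0 < n" "1 < n" using assms(3) by auto
  then have "(k ^ 0 - 1) mod p^2 \<in> {(k ^ j - 1) mod (p^2) | j. j < n}"
      "(k ^ 1 - 1) mod p^2 \<in> {(k ^ j - 1) mod (p^2) | j. j < n}"
      "(1 - k ^ 0) mod p^2 \<in> {(1 - k ^ j) mod (p^2) | j. j < n}"
      "(1 - k ^ 1) mod p^2 \<in> {(1 - k ^ j) mod (p^2) | j. j < n}"
    by blast+
  moreover have "coprime ((k - 1) mod p^2) (p^2)" "coprime ((1 - k) mod p^2) (p^2)"
  proof -
    have "p^2 \<noteq> 0" using assms(1) by auto
    moreover have unit: "coprime (k - 1) (p^2)"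
      using assms(4) by (rule coprime_commute[THEN iffD1])
    moreover have "coprime (1 - k) (p^2)"
      using unit coprime_minus_left_iff[of "k - 1"] by (metis minus_diff_eq)
    ultimately show "coprime ((k - 1) mod p^2) (p^2)" "coprime ((1 - k) mod p^2) (p^2)"
      by (metis coprime_mod_left_iff)+
  qed
  ultimately show ?thesis
    using Sigma_complete_prime_square[OF assms(1)] by simp
qed

end
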